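(* For every $\varepsilon>0$, any deterministic algorithm that, given query access to the distance matrix, estimates the graphic TSP cost (respectively the $(1,2)$-TSP cost) of an $n$-vertex instance to within a factor $(2-\varepsilon)$ requires $\Omega(\varepsilon n^2)$ queries.
   Context: For a connected unweighted undirected graph $G=(V,E)$ with $n\ge 2$ vertices, the graphic TSP cost is $\min \sum_{i=1}^{n} d_G(v_i,v_{i+1})$ over cyclic orderings $(v_1,\dots,v_n)$ of $V$ ($v_{n+1}=v_1$), where $d_G$ is shortest-path distance; the distance matrix has entries $d_G(u,v)$. A $(1,2)$-TSP instance is a metric on $n$ points with all distances between distinct points in $\{1,2\}$, cost defined analogously. Estimating to within a factor $c$ means outputting $X$ with $\mathrm{OPT}\le X\le c\,\mathrm{OPT}$. *)

theory Defs
  imports Complex_Main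
begin

definition is_graph :: "nat \<Rightarrow> (nat \<Rightarrow> nat \<Rightarrow> bool) \<Rightarrow> bool" where
  "is_graph n E \<longleftrightarrow> (\<forall>u v. E u v \<longrightarrow> u < n \<and> v < n \<and> u \<noteq> v \<and> E v u)"

definition is_walk :: "(nat \<Rightarrow> nat \<Rightarrow> bool) \<Rightarrow> nat list \<Rightarrow> bool" where
  "is_walk E p \<longleftrightarrow> p \<noteq> [] \<and> (\<forall>i. Suc i < length p \<longrightarrow> E (p ! i) (p ! Suc i))"

definition connected_graph :: "nat \<Rightarrow> (nat \<Rightarrow> nat \<Rightarrow> bool) \<Rightarrow> bool" where
  "connected_graph n E \<longleftrightarrow> (\<forall>u<n. \<forall>v<n. \<exists>p. is_walk E p \<and> hd p = u \<and> last p = v)"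

definition gdist :: "(nat \<Rightarrow> nat \<Rightarrow> bool) \<Rightarrow> nat \<Rightarrow> nat \<Rightarrow> nat" where
  "gdist E u v = (LEAST k. \<exists>p. is_walk E p \<and> hd p = u \<and> last p = v \<and> length p = Suc k)"

text \<open>Distance matrix of an instance, as a total function (value 0 outside the index range).\<close>

definition graphic_instance :: "nat \<Rightarrow> (nat \<Rightarrow> nat \<Rightarrow> nat) \<Rightarrow> bool" where
  "graphic_instance n M \<longleftrightarrow> (\<exists>E. is_graph n E \<and> connected_graph n E \<and>
      M = (\<lambda>i j. if i < n \<and> j < n then gdist E i j else 0))"

definition onetwo_instance :: "nat \<Rightarrow> (nat \<Rightarrow> nat \<Rightarrow> nat) \<Rightarrow> bool" where
  "onetwo_instance n M \<longleftrightarrow>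
     (\<forall>i j. \<not> (i < n \<and> j < n) \<longrightarrow> M i j = 0) \<and>
     (\<forall>i<n. M i i = 0) \<and>
     (\<forall>i<n. \<forall>j<n. M i j = M j i) \<and>
     (\<forall>i<n. \<forall>j<n. i \<noteq> j \<longrightarrow> M i j \<in> {1, 2})"

definition tsp_cost :: "nat \<Rightarrow> (nat \<Rightarrow> nat \<Rightarrow> nat) \<Rightarrow> nat" where
  "tsp_cost n M = Min {(\<Sum>i<n. M (\<sigma> i) (\<sigma> (Suc i mod n))) | \<sigma>. bij_betw \<sigma> {..<n} {..<n}}"

section \<open>Deterministic adaptive query algorithms (decision trees)\<close>

datatype qtree = Output real | Query nat nat "nat \<Rightarrow> qtree"

primrec run :: "qtree \<Rightarrow> (nat \<Rightarrow> nat \<Rightarrow> nat) \<Rightarrow> real" where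
  "run (Output x) M = x"
| "run (Query i j f) M = run (f (M i j)) M"

primrec num_queries :: "qtree \<Rightarrow> (nat \<Rightarrow> nat \<Rightarrow> nat) \<Rightarrow> nat" where
  "num_queries (Output x) M = 0"
| "num_queries (Query i j f) M = Suc (num_queries (f (M i j)) M)"

definition estimates_within ::
  "(nat \<Rightarrow> (nat \<Rightarrow> nat \<Rightarrow> nat) \<Rightarrow> bool) \<Rightarrow> nat \<Rightarrow> real \<Rightarrow> qtree \<Rightarrow> bool" where
  "estimates_within P n c T \<longleftrightarrow> (\<forall>M. P n M \<longrightarrow>
      real (tsp_cost n M) \<le> run T M \<and> run T M \<le> c * real (tsp_cost n M))"

end

theory Submission
  imports Defs
begin

text \<open>
  The adversary answers every query as in the star centred at vertex 0, whose optimal tour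
  costs \<open>2n - 2\<close>. An algorithm that asks \<open>q\<close> queries cannot tell the star apart from the
  instance in which only the queried pairs keep distance 2 and all other pairs get distance 1.
  In that instance at most \<open>16q/n\<close> vertices lie in \<open>n/8\<close> or more queried pairs; a greedy path
  of cost-1 edges through the other vertices, into which the leftover vertices are inserted
  between two cost-1 neighbours whenever possible, gives a tour of cost \<open>n + 1 + O(q/n)\<close>.
  Both answers coincide, so a \<open>(2 - \<epsilon>)\<close>-estimate forces \<open>q = \<Omega>(\<epsilon> n\<^sup>2)\<close>.
\<close>

primrec queried :: "qtree \<Rightarrow> (nat \<Rightarrow> nat \<Rightarrow> nat) \<Rightarrow> (nat \<times> nat) set" where
  "queried (Output x) M = {}"
| "queried (Query i j f) M = insert (i, j) (queried (f (M i j)) M)"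

lemma finite_queried: "finite (queried T M)"
  by (induction T) auto

lemma card_queried_le: "card (queried T M) \<le> num_queries T M"
proof (induction T)
  case (Query i j f)
  have "card (queried (Query i j f) M) \<le> Suc (card (queried (f (M i j)) M))"
    by (simp add: card_insert_if finite_queried)
  also have "\<dots> \<le> num_queries (Query i j f) M"
    using Query.IH[OF rangeI] by simp
  finally show ?case .
qed simp

lemma run_cong_queried:
  "(\<And>i j. (i, j) \<in> queried T M \<Longrightarrow> M' i j = M i j) \<Longrightarrow> run T M' = run T M"
proof (induction T)
  case (Query i j f)
  then have "M' i j = M i j" "run (f (M i j)) M' = run (f (M i j)) M"
    by auto
  then show ?case by simp
qed simp

section \<open>Costs of paths and tours\<close>

fun path_cost :: "('a \<Rightarrow> 'a \<Rightarrow> nat) \<Rightarrow> 'a list \<Rightarrow> nat" where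
  "path_cost M (u # v # vs) = M u v + path_cost M (v # vs)"
| "path_cost M _ = 0"

definition tour_cost :: "('a \<Rightarrow> 'a \<Rightarrow> nat) \<Rightarrow> 'a list \<Rightarrow> nat" where
  "tour_cost M t = path_cost M (t @ [hd t])"

lemma path_cost_append:
  "path_cost M (xs @ y # ys) = path_cost M (xs @ [y]) + path_cost M (y # ys)"
  by (induction xs rule: induct_list012) auto

lemma path_cost_snoc: "xs \<noteq> [] \<Longrightarrow> path_cost M (xs @ [y]) = path_cost M xs + M (last xs) y"
  by (induction xs rule: induct_list012) auto

lemma path_cost_conv_sum: "path_cost M xs = (\<Sum>i < length xs - 1. M (xs ! i) (xs ! Suc i))"
proof (induction xs rule: induct_list012)
  case (3 x y zs)
  have "(\<Sum>i < length (x # y # zs) - 1. M ((x # y # zs) ! i) ((x # y # zs) ! Suc i))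
      = M x y + (\<Sum>i < length zs. M ((y # zs) ! i) ((y # zs) ! Suc i))"
    by (simp add: sum.lessThan_Suc_shift del: sum.lessThan_Suc)
  then show ?case using "3.IH"(2) by simp
qed auto

lemma tour_cost_conv_sum:
  assumes "length t = n" "n \<ge> 1"
  shows "tour_cost M t = (\<Sum>i<n. M (t ! i) (t ! (Suc i mod n)))"
  unfolding tour_cost_def path_cost_conv_sum
proof (rule sum.cong)
  fix i assume "i \<in> {..<n}"
  then consider "Suc i < n" | "Suc i = n" by fastforce
  then have "(t @ [hd t]) ! Suc i = t ! (Suc i mod n)"
  proof cases
    case 2
    with assms show ?thesis by (cases t) (auto simp: nth_append)
  qed (use assms in \<open>simp add: nth_append\<close>)
  moreover have "(t @ [hd t]) ! i = t ! i"
    using \<open>i \<in> {..<n}\<close> assms by (simp add: nth_append)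
  ultimately show "M ((t @ [hd t]) ! i) ((t @ [hd t]) ! Suc i) = M (t ! i) (t ! (Suc i mod n))"
    by simp
qed (use assms in simp)

lemma tour_insert:
  assumes "distinct t" "w \<notin> set t" "t @ [hd t] = a @ u # u' # b"
  shows "\<exists>t'. distinct t' \<and> set t' = insert w (set t) \<and> length t' = Suc (length t) \<and>
    tour_cost M t' + M u u' = tour_cost M t + M u w + M w u'"
proof -
  have t: "t = a @ u # butlast (u' # b)"
    using arg_cong[OF assms(3), of butlast] by (simp add: butlast_append)
  have closing: "last (u' # b) = hd t"
    using arg_cong[OF assms(3), of last] by simp
  define t' where "t' = a @ u # w # butlast (u' # b)"
  have "hd t' = hd t"
    unfolding t'_def by (subst t) (cases a; simp)
  then have "t' @ [hd t'] = t' @ [last (u' # b)]"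
    by (simp only: closing)
  also have "\<dots> = a @ u # w # (butlast (u' # b) @ [last (u' # b)])"
    by (simp only: t'_def append_assoc append_Cons)
  also have "\<dots> = a @ u # w # u' # b"
    by (subst append_butlast_last_id) simp_all
  finally have closed: "t' @ [hd t'] = a @ u # w # u' # b" .
  have "distinct t' \<and> set t' = insert w (set t) \<and> length t' = Suc (length t)"
    using assms(1,2) unfolding t'_def by (subst (asm) (1 2) t, subst (1 2) t) auto
  moreover have "tour_cost M t' + M u u' = tour_cost M t + M u w + M w u'"
    unfolding tour_cost_def closed assms(3)
    using path_cost_append[of M a u "w # u' # b"] path_cost_append[of M a u "u' # b"] by simp
  ultimately show ?thesis by blast
qed

lemma length_le_filter_if_adjacent_hit:
  assumes "\<forall>a u u' b. c = a @ u # u' # b \<longrightarrow> P u \<or> P u'"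
  shows "length c \<le> 2 * length (filter P c) + 1"
  using assms
proof (induction c rule: induct_list012)
  case (3 x y zs)
  have "\<forall>a u u' b. y # zs = a @ u # u' # b \<longrightarrow> P u \<or> P u'"
    "\<forall>a u u' b. zs = a @ u # u' # b \<longrightarrow> P u \<or> P u'"
    using "3.prems" by (metis append_Cons)+
  moreover have "P x \<or> P y"
    using "3.prems" by (metis append_Nil)
  ultimately show ?case using "3.IH" by auto
qed auto

lemma adjacent_in_tour_distinct:
  assumes "distinct t" "2 \<le> length t" "t @ [hd t] = a @ u # u' # b"
  shows "u \<noteq> u'"
proof (cases b)
  case Nil
  with assms(3) have "t = a @ [u]" "u' = hd t" by auto
  with assms(1,2) show ?thesis by (cases a) auto
next
  case (Cons z zs)
  have "t = a @ u # butlast (u' # b)"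
    using arg_cong[OF assms(3), of butlast] by (simp add: butlast_append)
  with Cons assms(1) show ?thesis by auto
qed

lemma finite_tour_sums:
  fixes M :: "nat \<Rightarrow> nat \<Rightarrow> nat"
  shows "finite {(\<Sum>i<n. M (\<sigma> i) (\<sigma> (Suc i mod n))) | \<sigma>. bij_betw \<sigma> {..<n} {..<n}}"
proof (rule finite_subset)
  define K where "K = (\<Sum>a<n. \<Sum>b<n. M a b)"
  have entry_le: "M a b \<le> K" if "a < n" "b < n" for a b
  proof -
    have "M a b \<le> (\<Sum>b<n. M a b)" using that by (intro member_le_sum) auto
    also have "\<dots> \<le> K" unfolding K_def using that by (intro member_le_sum) auto
    finally show ?thesis .
  qed
  show "{(\<Sum>i<n. M (\<sigma> i) (\<sigma> (Suc i mod n))) | \<sigma>. bij_betw \<sigma> {..<n} {..<n}} \<subseteq> {..n * K}"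
  proof
    fix x assume "x \<in> {(\<Sum>i<n. M (\<sigma> i) (\<sigma> (Suc i mod n))) | \<sigma>. bij_betw \<sigma> {..<n} {..<n}}"
    then obtain \<sigma> where x: "x = (\<Sum>i<n. M (\<sigma> i) (\<sigma> (Suc i mod n)))"
      and "bij_betw \<sigma> {..<n} {..<n}" by blast
    then have \<sigma>: "\<sigma> i < n" if "i < n" for i using that by (auto dest: bij_betwE)
    have "x \<le> (\<Sum>i<n. K)"
      unfolding x by (intro sum_mono entry_le \<sigma>) auto
    then show "x \<in> {..n * K}" by simp
  qed
qed simp

lemma tsp_cost_attained:
  "\<exists>\<sigma>. bij_betw \<sigma> {..<n} {..<n} \<and> tsp_cost n M = (\<Sum>i<n. M (\<sigma> i) (\<sigma> (Suc i mod n)))"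
proof -
  let ?A = "{(\<Sum>i<n. M (\<sigma> i) (\<sigma> (Suc i mod n))) | \<sigma>. bij_betw \<sigma> {..<n} {..<n}}"
  have "?A \<noteq> {}" using bij_betw_id[of "{..<n}"] by (auto simp: id_def)
  then have "Min ?A \<in> ?A" by (intro Min_in finite_tour_sums)
  then show ?thesis unfolding tsp_cost_def by blast
qed

lemma tsp_cost_le_sum:
  "bij_betw \<sigma> {..<n} {..<n} \<Longrightarrow> tsp_cost n M \<le> (\<Sum>i<n. M (\<sigma> i) (\<sigma> (Suc i mod n)))"
  unfolding tsp_cost_def by (rule Min_le[OF finite_tour_sums]) blast

lemma tsp_cost_le_tour_cost:
  assumes "distinct t" "set t = {..<n}" "n \<ge> 1"
  shows "tsp_cost n M \<le> tour_cost M t"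
proof -
  have "length t = n" using assms(1,2) distinct_card by fastforce
  moreover have "bij_betw ((!) t) {..<n} {..<n}"
    by (rule bij_betw_nth) (use assms \<open>length t = n\<close> in auto)
  ultimately show ?thesis
    using tsp_cost_le_sum tour_cost_conv_sum assms(3) by metis
qed

lemma tsp_cost_le_mult:
  assumes "\<forall>i<n. \<forall>j<n. M i j \<le> K"
  shows "tsp_cost n M \<le> K * n"
proof -
  have "tsp_cost n M \<le> (\<Sum>i<n. M i (Suc i mod n))"
    using tsp_cost_le_sum[of "\<lambda>i. i" n M] bij_betw_id[unfolded id_def] by blast
  also have "\<dots> \<le> (\<Sum>i<n. K)"
    using assms by (intro sum_mono) auto
  finally show ?thesis by (simp add: mult.commute)
qed

lemma gdist_eqI:
  assumes "is_walk E p" "hd p = u" "last p = v" "length p = Suc k"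
    and "\<And>q. is_walk E q \<Longrightarrow> hd q = u \<Longrightarrow> last q = v \<Longrightarrow> Suc k \<le> length q"
  shows "gdist E u v = k"
  unfolding gdist_def
proof (rule Least_equality)
  show "\<exists>p. is_walk E p \<and> hd p = u \<and> last p = v \<and> length p = Suc k"
    using assms(1-4) by blast
qed (use assms(5) in fastforce)

lemma gdist_self: "gdist E u u = 0"
  by (rule gdist_eqI[of E "[u]"]) (auto simp: is_walk_def Suc_le_eq)

lemma gdist_edge:
  assumes "E u v" "u \<noteq> v"
  shows "gdist E u v = 1"
proof (rule gdist_eqI[of E "[u, v]"])
  fix q assume "is_walk E q" "hd q = u" "last q = v"
  with assms(2) show "Suc 1 \<le> length q"
    by (cases q rule: remdups_adj.cases) (auto simp: is_walk_def)
qed (use assms(1) in \<open>auto simp: is_walk_def\<close>)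

lemma gdist_via_middle:
  assumes "\<not> E u v" "u \<noteq> v" "E u w" "E w v"
  shows "gdist E u v = 2"
proof (rule gdist_eqI[of E "[u, w, v]"])
  fix q assume q: "is_walk E q" "hd q = u" "last q = v"
  have "length q \<noteq> 1" "length q \<noteq> 2"
    using q assms(1,2)
    by (cases q rule: remdups_adj.cases; auto simp: is_walk_def dest: spec[of _ 0])+
  moreover have "length q \<noteq> 0" using q(1) by (simp add: is_walk_def)
  ultimately show "Suc 2 \<le> length q" by arith
qed (use assms(3,4) in \<open>auto simp: is_walk_def less_Suc_eq nth_Cons split: nat.splits\<close>)

section \<open>The adversary instances\<close>

text \<open>
  \<open>hub_matrix n S\<close> is the distance matrix of \<open>hub_graph n S\<close> (lemma \<open>gdist_hub_graph\<close>):
  vertex 0 is adjacent to all others, and two other vertices are non-adjacent exactly when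
  their pair lies in \<open>S\<close>. For \<open>S = UNIV\<close> this is the star, whose answers the adversary gives.
\<close>

definition blocked :: "(nat \<times> nat) set \<Rightarrow> nat \<Rightarrow> nat \<Rightarrow> bool" where
  "blocked S u v \<longleftrightarrow> u \<noteq> v \<and> u \<noteq> 0 \<and> v \<noteq> 0 \<and> ((u, v) \<in> S \<or> (v, u) \<in> S)"

definition hub_graph :: "nat \<Rightarrow> (nat \<times> nat) set \<Rightarrow> nat \<Rightarrow> nat \<Rightarrow> bool" where
  "hub_graph n S u v \<longleftrightarrow> u < n \<and> v < n \<and> u \<noteq> v \<and> \<not> blocked S u v"

definition hub_matrix :: "nat \<Rightarrow> (nat \<times> nat) set \<Rightarrow> nat \<Rightarrow> nat \<Rightarrow> nat" where
  "hub_matrix n S i j =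
     (if i < n \<and> j < n then (if i = j then 0 else if blocked S i j then 2 else 1) else 0)"

lemma blocked_sym: "blocked S u v \<longleftrightarrow> blocked S v u"
  unfolding blocked_def by auto

lemma hub_matrix_le_2: "hub_matrix n S i j \<le> 2"
  unfolding hub_matrix_def by auto

lemma hub_matrix_unblocked:
  "i < n \<Longrightarrow> j < n \<Longrightarrow> i \<noteq> j \<Longrightarrow> \<not> blocked S i j \<Longrightarrow> hub_matrix n S i j = 1"
  unfolding hub_matrix_def by auto

lemma hub_matrix_ge_1: "i < n \<Longrightarrow> j < n \<Longrightarrow> i \<noteq> j \<Longrightarrow> 1 \<le> hub_matrix n S i j"
  unfolding hub_matrix_def by auto

lemma hub_matrix_queried: "(i, j) \<in> S \<Longrightarrow> hub_matrix n S i j = hub_matrix n UNIV i j"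
  unfolding hub_matrix_def blocked_def by auto

lemma onetwo_instance_hub_matrix: "onetwo_instance n (hub_matrix n S)"
  unfolding onetwo_instance_def hub_matrix_def using blocked_sym by auto

lemma hub_graph_via_hub:
  "blocked S u v \<Longrightarrow> u < n \<Longrightarrow> v < n \<Longrightarrow> hub_graph n S u 0 \<and> hub_graph n S 0 v"
  unfolding hub_graph_def blocked_def by auto

lemma gdist_hub_graph:
  assumes "i < n" "j < n"
  shows "gdist (hub_graph n S) i j = hub_matrix n S i j"
proof -
  consider "i = j" | "i \<noteq> j" "\<not> blocked S i j" | "blocked S i j"
    using blocked_def by blast
  then show ?thesis
  proof cases
    case 3
    with assms have "hub_graph n S i 0" "hub_graph n S 0 j"
      by (simp_all add: hub_graph_via_hub)
    moreover have "\<not> hub_graph n S i j" "i \<noteq> j"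
      using 3 by (auto simp: hub_graph_def blocked_def)
    ultimately have "gdist (hub_graph n S) i j = 2"
      by (intro gdist_via_middle)
    with 3 assms show ?thesis by (simp add: hub_matrix_def blocked_def)
  qed (use assms in \<open>auto simp: gdist_self gdist_edge hub_graph_def hub_matrix_def\<close>)
qed

lemma graphic_instance_hub_matrix: "graphic_instance n (hub_matrix n S)"
  unfolding graphic_instance_def
proof (intro exI conjI)
  show "is_graph n (hub_graph n S)"
    unfolding is_graph_def hub_graph_def using blocked_sym by auto
  show "connected_graph n (hub_graph n S)"
    unfolding connected_graph_def
  proof (intro allI impI)
    fix u v assume uv: "u < n" "v < n"
    consider "u = v" | "u \<noteq> v" "\<not> blocked S u v" | "blocked S u v"
      using blocked_def by blast
    then show "\<exists>p. is_walk (hub_graph n S) p \<and> hd p = u \<and> last p = v"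
    proof cases
      case 1
      then show ?thesis by (intro exI[of _ "[u]"]) (auto simp: is_walk_def)
    next
      case 2
      with uv show ?thesis by (intro exI[of _ "[u, v]"]) (auto simp: is_walk_def hub_graph_def)
    next
      case 3
      with uv have "is_walk (hub_graph n S) [u, 0, v]"
        using hub_graph_via_hub by (auto simp: is_walk_def less_Suc_eq nth_Cons split: nat.splits)
      then show ?thesis by (intro exI[of _ "[u, 0, v]"]) auto
    qed
  qed
  show "hub_matrix n S = (\<lambda>i j. if i < n \<and> j < n then gdist (hub_graph n S) i j else 0)"
    by (auto simp: fun_eq_iff gdist_hub_graph hub_matrix_def)
qed

section \<open>The star needs cost about 2n\<close>

lemma bij_betw_Suc_mod: "bij_betw (\<lambda>i. Suc i mod n) {..<n} {..<n}"
proof -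
  have "inj_on (\<lambda>i. Suc i mod n) {..<n}"
    by (auto simp: inj_on_def mod_Suc split: if_splits)
  moreover have "(\<lambda>i. Suc i mod n) ` {..<n} \<subseteq> {..<n}"
    by auto
  ultimately show ?thesis
    by (simp add: bij_betw_def endo_inj_surj)
qed

lemma star_edge_cost:
  "a < n \<Longrightarrow> b < n \<Longrightarrow> a \<noteq> b \<Longrightarrow> 2 \<le> hub_matrix n UNIV a b + of_bool (a = 0) + of_bool (b = 0)"
  unfolding hub_matrix_def blocked_def by auto

lemma tsp_cost_star:
  assumes "2 \<le> n"
  shows "2 * n \<le> tsp_cost n (hub_matrix n UNIV) + 2"
proof -
  let ?M = "hub_matrix n UNIV"
  obtain \<sigma> where \<sigma>: "bij_betw \<sigma> {..<n} {..<n}"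
    and opt: "tsp_cost n ?M = (\<Sum>i<n. ?M (\<sigma> i) (\<sigma> (Suc i mod n)))"
    using tsp_cost_attained by blast
  have \<sigma>': "bij_betw (\<lambda>i. \<sigma> (Suc i mod n)) {..<n} {..<n}"
    using bij_betw_trans[OF bij_betw_Suc_mod \<sigma>] by (simp add: comp_def)
  have hub_once: "(\<Sum>i<n. of_bool (\<tau> i = 0)) = (1::nat)" if "bij_betw \<tau> {..<n} {..<n}" for \<tau>
  proof -
    have "(\<Sum>i<n. of_bool (\<tau> i = 0)) = (\<Sum>j<n. of_bool (j = 0) :: nat)"
      by (rule sum.reindex_bij_betw[OF that])
    also have "\<dots> = 1"
      using assms by (simp add: sum.If_cases)
    finally show ?thesis .
  qed
  txt \<open>Tour edges avoiding vertex 0 cost 2, and exactly two tour edges touch vertex 0.\<close>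
  have "(\<Sum>i<n. 2) \<le> (\<Sum>i<n. ?M (\<sigma> i) (\<sigma> (Suc i mod n)) + of_bool (\<sigma> i = 0) + of_bool (\<sigma> (Suc i mod n) = 0))"
  proof (rule sum_mono)
    fix i assume i: "i \<in> {..<n}"
    moreover have "i \<noteq> Suc i mod n" using i assms by (auto simp: mod_Suc)
    ultimately show "2 \<le> ?M (\<sigma> i) (\<sigma> (Suc i mod n)) + of_bool (\<sigma> i = 0) + of_bool (\<sigma> (Suc i mod n) = 0)"
      using \<sigma> bij_betw_Suc_mod
      by (intro star_edge_cost) (auto dest: bij_betwE bij_betw_imp_inj_on[THEN inj_onD])
  qed
  also have "\<dots> = tsp_cost n ?M + 2"
    using hub_once[OF \<sigma>] hub_once[OF \<sigma>'] by (simp add: sum.distrib opt)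
  finally show ?thesis by simp
qed

section \<open>Cheap tours when few pairs are queried\<close>

definition blocked_degree :: "nat \<Rightarrow> (nat \<times> nat) set \<Rightarrow> nat \<Rightarrow> nat" where
  "blocked_degree n S w = card {u. u < n \<and> blocked S w u}"

definition heavy_vertices :: "nat \<Rightarrow> (nat \<times> nat) set \<Rightarrow> nat \<Rightarrow> nat set" where
  "heavy_vertices n S k = {w. w < n \<and> k \<le> blocked_degree n S w}"

lemma exists_unblocked:
  assumes "A \<subseteq> {..<n}" "blocked_degree n S v < card A"
  shows "\<exists>u\<in>A. \<not> blocked S v u"
proof (rule ccontr)
  assume "\<not> ?thesis"
  then have "A \<subseteq> {u. u < n \<and> blocked S v u}" using assms(1) by auto
  then have "card A \<le> blocked_degree n S v"
    unfolding blocked_degree_def by (intro card_mono) auto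
  with assms(2) show False by simp
qed

lemma unblocked_path_extension:
  assumes L: "L \<subseteq> {..<n}" and light: "\<forall>v\<in>L. blocked_degree n S v < k"
  shows "p \<noteq> [] \<Longrightarrow> distinct p \<Longrightarrow> set p \<subseteq> L \<Longrightarrow> path_cost (hub_matrix n S) p + 1 = length p \<Longrightarrow>
    \<exists>p'. p' \<noteq> [] \<and> distinct p' \<and> set p' \<subseteq> L \<and> path_cost (hub_matrix n S) p' + 1 = length p'
      \<and> card (L - set p') < k"
proof (induction "card (L - set p)" arbitrary: p rule: less_induct)
  case less
  have "finite L" using L finite_subset by blast
  show ?case
  proof (cases "card (L - set p) < k")
    case False
    have "last p \<in> L" using less.prems(1,3) by auto
    with light False have "blocked_degree n S (last p) < card (L - set p)" by fastforce
    then obtain u where u: "u \<in> L" "u \<notin> set p" "\<not> blocked S (last p) u"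
      using exists_unblocked[of "L - set p"] L by blast
    with less.prems L \<open>last p \<in> L\<close> have "hub_matrix n S (last p) u = 1"
      by (intro hub_matrix_unblocked) auto
    then have "path_cost (hub_matrix n S) (p @ [u]) + 1 = length (p @ [u])"
      using less.prems(1,4) by (simp add: path_cost_snoc)
    moreover have "card (L - set (p @ [u])) < card (L - set p)"
      using u \<open>finite L\<close> by (intro psubset_card_mono) auto
    moreover have "p @ [u] \<noteq> []" "distinct (p @ [u])" "set (p @ [u]) \<subseteq> L"
      using less.prems u by auto
    ultimately show ?thesis by (intro less.hyps)
  qed (use less.prems in blast)
qed

lemma exists_unblocked_slot:
  assumes "distinct t" "set t \<subseteq> {..<n}" "2 * blocked_degree n S w + 2 < length t"
  shows "\<exists>a u u' b. t @ [hd t] = a @ u # u' # b \<and> \<not> blocked S w u \<and> \<not> blocked S w u'"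
proof (rule ccontr)
  assume "\<not> ?thesis"
  then have "length (t @ [hd t]) \<le> 2 * length (filter (blocked S w) (t @ [hd t])) + 1"
    by (intro length_le_filter_if_adjacent_hit) blast
  moreover have "length (filter (blocked S w) (t @ [hd t])) \<le> length (filter (blocked S w) t) + 1"
    by simp
  moreover have "length (filter (blocked S w) t) = card ({u. blocked S w u} \<inter> set t)"
    using assms(1) by (simp add: distinct_length_filter)
  moreover have "card ({u. blocked S w u} \<inter> set t) \<le> blocked_degree n S w"
    unfolding blocked_degree_def using assms(2) by (intro card_mono) auto
  ultimately show False using assms(3) by simp
qed

lemma hub_tour_insert:
  assumes "distinct t" "set t \<subseteq> {..<n}" "2 \<le> length t" "w < n" "w \<notin> set t"
    and slot: "t @ [hd t] = a @ u # u' # b"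
  shows "\<exists>t'. distinct t' \<and> set t' = insert w (set t) \<and> length t' = Suc (length t) \<and>
    tour_cost (hub_matrix n S) t' + 1 \<le> tour_cost (hub_matrix n S) t
      + hub_matrix n S u w + hub_matrix n S w u'"
proof -
  have "u \<in> set t" "u' \<in> set t"
    using arg_cong[OF slot, of set] assms(3) by (cases t; auto)+
  moreover have "u \<noteq> u'"
    using assms(1,3) slot by (rule adjacent_in_tour_distinct)
  ultimately have "1 \<le> hub_matrix n S u u'"
    using assms(2) by (intro hub_matrix_ge_1) auto
  moreover obtain t' where "distinct t'" "set t' = insert w (set t)" "length t' = Suc (length t)"
    "tour_cost (hub_matrix n S) t' + hub_matrix n S u u'
      = tour_cost (hub_matrix n S) t + hub_matrix n S u w + hub_matrix n S w u'"
    using tour_insert[OF assms(1,5) slot] by blast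
  ultimately show ?thesis by (intro exI[of _ t']) auto
qed

lemma hub_tour_insert_vertex:
  assumes "distinct t" "set t \<subseteq> {..<n}" "2 \<le> length t" "w < n" "w \<notin> set t"
  shows "\<exists>t'. distinct t' \<and> set t' = insert w (set t) \<and> length t' = Suc (length t) \<and>
    tour_cost (hub_matrix n S) t'
      \<le> tour_cost (hub_matrix n S) t + (if 2 * blocked_degree n S w + 2 < length t then 1 else 3)"
proof (cases "2 * blocked_degree n S w + 2 < length t")
  case True
  then obtain a u u' b where slot: "t @ [hd t] = a @ u # u' # b"
    and "\<not> blocked S u w" "\<not> blocked S w u'"
    using exists_unblocked_slot assms(1,2) blocked_sym by metis
  moreover have "u \<in> set t" "u' \<in> set t"
    using arg_cong[OF slot, of set] assms(3) by (cases t; auto)+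
  ultimately have "hub_matrix n S u w = 1" "hub_matrix n S w u' = 1"
    using assms(2,4,5) by (auto intro: hub_matrix_unblocked[unfolded One_nat_def])
  with hub_tour_insert[OF assms slot, of S] True show ?thesis by auto
next
  case False
  obtain x xs where "t = x # xs" using assms(3) by (cases t) auto
  then have slot: "t @ [hd t] = [] @ x # hd (xs @ [x]) # tl (xs @ [x])" by simp
  with hub_tour_insert[OF assms slot, of S] False
    hub_matrix_le_2[of n S x w] hub_matrix_le_2[of n S w "hd (xs @ [x])"]
  show ?thesis by fastforce
qed

text \<open>
  Heaviness is measured against the length of the initial path \<open>p\<close>: the tour only grows, so
  every other vertex still finds a slot between two unblocked neighbours and costs 1.
\<close>

lemma hub_tour_insert_all:
  assumes "finite R"
  shows "R \<inter> set p = {} \<Longrightarrow> distinct p \<Longrightarrow> set p \<union> R \<subseteq> {..<n} \<Longrightarrow> 2 \<le> length p \<Longrightarrow>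
    \<exists>t. distinct t \<and> set t = set p \<union> R \<and> length t = length p + card R \<and>
      tour_cost (hub_matrix n S) t \<le> tour_cost (hub_matrix n S) p + card R
        + 2 * card {w\<in>R. length p \<le> 2 * blocked_degree n S w + 2}"
  using assms
proof (induction R rule: finite_induct)
  case empty
  then show ?case by auto
next
  case (insert w R)
  let ?heavy = "\<lambda>R. card {w\<in>R. length p \<le> 2 * blocked_degree n S w + 2}"
  obtain t where t: "distinct t" "set t = set p \<union> R" "length t = length p + card R"
    "tour_cost (hub_matrix n S) t \<le> tour_cost (hub_matrix n S) p + card R + 2 * ?heavy R"
    using insert by auto
  moreover have "w \<notin> set t" "w < n" "set t \<subseteq> {..<n}" "2 \<le> length t"
    using t insert.hyps insert.prems by auto
  ultimately obtain t' where t': "distinct t'" "set t' = insert w (set t)" "length t' = Suc (length t)"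
    "tour_cost (hub_matrix n S) t'
      \<le> tour_cost (hub_matrix n S) t + (if 2 * blocked_degree n S w + 2 < length t then 1 else 3)"
    using hub_tour_insert_vertex by blast
  have "?heavy (insert w R) = ?heavy R + (if length p \<le> 2 * blocked_degree n S w + 2 then 1 else 0)"
  proof -
    have "{w'\<in>insert w R. length p \<le> 2 * blocked_degree n S w' + 2}
      = (if length p \<le> 2 * blocked_degree n S w + 2 then insert w else id)
          {w'\<in>R. length p \<le> 2 * blocked_degree n S w' + 2}"
      by auto
    then show ?thesis using insert.hyps by simp
  qed
  moreover have "(if 2 * blocked_degree n S w + 2 < length t then 1 else 3)
      \<le> 1 + 2 * (if length p \<le> 2 * blocked_degree n S w + 2 then 1 else 0 :: nat)"
    using t(3) by auto
  ultimately show ?case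
    using t t' insert.hyps by (intro exI[of _ t']) auto
qed

lemma long_unblocked_path:
  assumes "1 \<le> k" and few_heavy: "3 * k + card (heavy_vertices n S k) < n"
  obtains p where "distinct p" "set p \<subseteq> {..<n}" "2 * k + 2 \<le> length p"
    "tour_cost (hub_matrix n S) p \<le> length p + 1"
proof -
  define H where "H = heavy_vertices n S k"
  define L where "L = {..<n} - H"
  have "H \<subseteq> {..<n}" unfolding H_def heavy_vertices_def by auto
  then have card_L: "card L = n - card H" unfolding L_def by (simp add: card_Diff_subset finite_subset)
  have "blocked_degree n S 0 = 0" unfolding blocked_degree_def blocked_def by simp
  with assms have "0 \<in> L" unfolding L_def H_def heavy_vertices_def by auto
  moreover have "\<forall>v\<in>L. blocked_degree n S v < k"
    unfolding L_def H_def heavy_vertices_def by auto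
  ultimately obtain p where p: "p \<noteq> []" "distinct p" "set p \<subseteq> L"
    "path_cost (hub_matrix n S) p + 1 = length p" "card (L - set p) < k"
    using unblocked_path_extension[of L n S k "[0]"] L_def by auto
  have "card L \<le> card (set p) + card (L - set p)"
    by (metis Diff_partition card_Un_le p(3))
  then have "2 * k + 2 \<le> length p"
    using p(2,5) card_L few_heavy unfolding H_def by (simp add: distinct_card)
  moreover have "tour_cost (hub_matrix n S) p \<le> length p + 1"
    using p(1,4) hub_matrix_le_2[of n S "last p" "hd p"]
    unfolding tour_cost_def by (simp add: path_cost_snoc)
  moreover have "set p \<subseteq> {..<n}" using p(3) unfolding L_def by auto
  ultimately show ?thesis using p(2) that by blast
qed

lemma tsp_cost_hub_matrix_le_heavy:
  assumes "1 \<le> k" and few_heavy: "3 * k + card (heavy_vertices n S k) < n"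
  shows "tsp_cost n (hub_matrix n S) \<le> n + 1 + 2 * card (heavy_vertices n S k)"
proof -
  let ?M = "hub_matrix n S"
  obtain p where p: "distinct p" "set p \<subseteq> {..<n}" "2 * k + 2 \<le> length p"
    "tour_cost ?M p \<le> length p + 1"
    using long_unblocked_path[OF assms] .
  define R where "R = {..<n} - set p"
  have R: "finite R" "R \<inter> set p = {}" "set p \<union> R = {..<n}"
    using p(2) unfolding R_def by auto
  obtain t where t: "distinct t" "set t = {..<n}" "length t = length p + card R"
    "tour_cost ?M t \<le> tour_cost ?M p + card R
      + 2 * card {w\<in>R. length p \<le> 2 * blocked_degree n S w + 2}"
    using hub_tour_insert_all[OF R(1,2) p(1), of n S] R(3) p(3) by auto
  have "length p + card R = n"
    using t(1-3) distinct_card by fastforce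
  moreover have "{w\<in>R. length p \<le> 2 * blocked_degree n S w + 2} \<subseteq> heavy_vertices n S k"
    using p(3) unfolding R_def heavy_vertices_def by auto
  then have "card {w\<in>R. length p \<le> 2 * blocked_degree n S w + 2} \<le> card (heavy_vertices n S k)"
    by (intro card_mono) (auto simp: heavy_vertices_def)
  moreover have "tsp_cost n ?M \<le> tour_cost ?M t"
    using t(1,2) few_heavy by (intro tsp_cost_le_tour_cost) auto
  ultimately show ?thesis using t(4) p(4) by linarith
qed

lemma tsp_cost_hub_matrix_le:
  assumes "1 \<le> k" "8 * k \<le> n"
  shows "tsp_cost n (hub_matrix n S) \<le> n + 1 + 2 * card (heavy_vertices n S k)"
proof (cases "3 * k + card (heavy_vertices n S k) < n")
  case True
  with assms(1) show ?thesis by (rule tsp_cost_hub_matrix_le_heavy)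
next
  case False
  have "tsp_cost n (hub_matrix n S) \<le> 2 * n"
    using tsp_cost_le_mult[of n "hub_matrix n S" 2] hub_matrix_le_2 by blast
  with False assms(2) show ?thesis by linarith
qed

lemma sum_blocked_degree_le:
  assumes "finite S"
  shows "(\<Sum>w<n. blocked_degree n S w) \<le> 2 * card S"
proof -
  have endpoints: "blocked_degree n S w \<le> card {e\<in>S. fst e = w} + card {e\<in>S. snd e = w}" for w
  proof -
    have "{u. u < n \<and> blocked S w u} \<subseteq> snd ` {e\<in>S. fst e = w} \<union> fst ` {e\<in>S. snd e = w}"
      unfolding blocked_def by force
    then have "blocked_degree n S w \<le> card (snd ` {e\<in>S. fst e = w} \<union> fst ` {e\<in>S. snd e = w})"
      unfolding blocked_degree_def using assms by (intro card_mono) auto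
    also have "\<dots> \<le> card {e\<in>S. fst e = w} + card {e\<in>S. snd e = w}"
      by (intro card_Un_le[THEN order_trans] add_mono card_image_le) (use assms in auto)
    finally show ?thesis .
  qed
  have fibres: "(\<Sum>w<n. card {e\<in>S. f e = w}) \<le> card S" for f :: "nat \<times> nat \<Rightarrow> nat"
  proof -
    have "(\<Sum>w<n. card {e\<in>S. f e = w}) = card (\<Union>w<n. {e\<in>S. f e = w})"
      using assms by (intro card_UN_disjoint[symmetric]) auto
    also have "\<dots> \<le> card S" using assms by (intro card_mono) auto
    finally show ?thesis .
  qed
  have "(\<Sum>w<n. blocked_degree n S w)
      \<le> (\<Sum>w<n. card {e\<in>S. fst e = w}) + (\<Sum>w<n. card {e\<in>S. snd e = w})"
    unfolding sum.distrib[symmetric] by (intro sum_mono endpoints)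
  also have "\<dots> \<le> card S + card S" by (intro add_mono fibres)
  finally show ?thesis by simp
qed

lemma card_heavy_vertices_le:
  assumes "finite S"
  shows "card (heavy_vertices n S k) * k \<le> 2 * card S"
proof -
  have "card (heavy_vertices n S k) * k = (\<Sum>w\<in>heavy_vertices n S k. k)" by simp
  also have "\<dots> \<le> (\<Sum>w\<in>heavy_vertices n S k. blocked_degree n S w)"
    by (rule sum_mono) (simp add: heavy_vertices_def)
  also have "\<dots> \<le> (\<Sum>w<n. blocked_degree n S w)"
    by (rule sum_mono2) (auto simp: heavy_vertices_def)
  also have "\<dots> \<le> 2 * card S" using assms by (rule sum_blocked_degree_le)
  finally show ?thesis .
qed

lemma tsp_cost_hub_matrix_bound:
  assumes "finite S" "8 \<le> n"
  shows "n * tsp_cost n (hub_matrix n S) \<le> n * (n + 1) + 64 * card S"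
proof -
  define k where "k = n div 8"
  have k: "1 \<le> k" "8 * k \<le> n" "n \<le> 16 * k"
    using assms(2) unfolding k_def by presburger+
  define h where "h = card (heavy_vertices n S k)"
  have "n * tsp_cost n (hub_matrix n S) \<le> n * (n + 1 + 2 * h)"
    unfolding h_def by (intro mult_le_mono2 tsp_cost_hub_matrix_le k(1,2))
  also have "\<dots> = n * (n + 1) + 2 * (n * h)"
    by (simp add: algebra_simps)
  also have "n * h \<le> 16 * (h * k)"
    using mult_le_mono1[OF k(3), of h] by (simp add: ac_simps)
  also have "h * k \<le> 2 * card S"
    unfolding h_def using assms(1) by (rule card_heavy_vertices_le)
  finally show ?thesis by simp
qed

lemma ratio_bounds_force_large_q:
  fixes n \<epsilon> X q :: real
  assumes lower: "2 * n - 2 \<le> (2 - \<epsilon>) * X" and upper: "n * X \<le> n * (n + 1) + 64 * q"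
    and "0 \<le> X" "0 \<le> q" "8 \<le> n" "8 \<le> \<epsilon> * n"
  shows "\<epsilon> * n ^ 2 \<le> 256 * q"
proof (rule ccontr)
  assume "\<not> ?thesis"
  then have few: "256 * q < \<epsilon> * n ^ 2" by simp
  have "0 < \<epsilon> * n" using \<open>8 \<le> \<epsilon> * n\<close> by linarith
  with \<open>8 \<le> n\<close> have "\<epsilon> > 0" by (auto simp: zero_less_mult_iff)
  show False
  proof (cases "\<epsilon> < 2")
    case True
    have "n * (2 * n - 2) \<le> (2 - \<epsilon>) * (n * X)"
      using mult_left_mono[OF lower, of n] \<open>8 \<le> n\<close> by (simp add: algebra_simps)
    also have "\<dots> \<le> (2 - \<epsilon>) * (n * (n + 1) + 64 * q)"
      using upper True by (intro mult_left_mono) auto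
    also have "\<dots> \<le> (2 - \<epsilon>) * (n * (n + 1)) + 128 * q"
      using \<open>\<epsilon> > 0\<close> \<open>0 \<le> q\<close> by (simp add: algebra_simps)
    finally have "n * (2 * n - 2) < (2 - \<epsilon>) * (n * (n + 1)) + (\<epsilon> * n) * n / 2"
      using few by (simp add: power2_eq_square)
    then have "(\<epsilon> * n) * n / 2 < 4 * n - \<epsilon> * n"
      by (simp add: algebra_simps)
    moreover have "8 * n \<le> (\<epsilon> * n) * n"
      using \<open>8 \<le> \<epsilon> * n\<close> \<open>8 \<le> n\<close> by (intro mult_right_mono) auto
    ultimately show False using \<open>8 \<le> \<epsilon> * n\<close> by linarith
  next
    case False
    then have "(2 - \<epsilon>) * X \<le> 0" using \<open>0 \<le> X\<close> by (simp add: mult_nonpos_nonneg)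
    with lower \<open>8 \<le> n\<close> show False by simp
  qed
qed

lemma queries_lower_bound:
  fixes \<epsilon> :: real
  assumes instances: "\<And>S. P n (hub_matrix n S)"
    and est: "estimates_within P n (2 - \<epsilon>) T"
    and "8 \<le> n" "8 \<le> \<epsilon> * n"
  shows "1 / 256 * \<epsilon> * real n ^ 2 \<le> real (num_queries T (hub_matrix n UNIV))"
proof -
  let ?star = "hub_matrix n UNIV"
  define S where "S = queried T ?star"
  define X where "X = real (tsp_cost n (hub_matrix n S))"
  have "run T (hub_matrix n S) = run T ?star"
    unfolding S_def by (rule run_cong_queried) (rule hub_matrix_queried)
  moreover have "2 * real n \<le> real (tsp_cost n ?star) + 2"
    using tsp_cost_star[of n] \<open>8 \<le> n\<close> by linarith
  moreover have "real (tsp_cost n ?star) \<le> run T ?star"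
    "run T (hub_matrix n S) \<le> (2 - \<epsilon>) * X"
    using est instances unfolding estimates_within_def X_def by blast+
  ultimately have "2 * real n - 2 \<le> (2 - \<epsilon>) * X"
    by linarith
  moreover have "n * tsp_cost n (hub_matrix n S) \<le> n * (n + 1) + 64 * num_queries T ?star"
    using tsp_cost_hub_matrix_bound[of S n] card_queried_le[of T ?star] \<open>8 \<le> n\<close>
    unfolding S_def by (simp add: finite_queried)
  then have "real (n * tsp_cost n (hub_matrix n S)) \<le> real (n * (n + 1) + 64 * num_queries T ?star)"
    by (simp only: of_nat_le_iff)
  then have "real n * X \<le> real n * (real n + 1) + 64 * real (num_queries T ?star)"
    unfolding X_def by (simp add: algebra_simps)
  ultimately have "\<epsilon> * real n ^ 2 \<le> 256 * real (num_queries T ?star)"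
    using assms(3,4) by (intro ratio_bounds_force_large_q) (auto simp: X_def)
  then show ?thesis by simp
qed

theorem mainTheorem6:
  shows "\<exists>c>0. \<forall>\<epsilon>>0. \<exists>N. \<forall>n\<ge>N.
     (\<forall>T. estimates_within graphic_instance n (2 - \<epsilon>) T \<longrightarrow>
        (\<exists>M. graphic_instance n M \<and> real (num_queries T M) \<ge> c * \<epsilon> * real n ^ 2)) \<and>
     (\<forall>T. estimates_within onetwo_instance n (2 - \<epsilon>) T \<longrightarrow>
        (\<exists>M. onetwo_instance n M \<and> real (num_queries T M) \<ge> c * \<epsilon> * real n ^ 2))"
proof (intro exI[of _ "1 / 256 :: real"] conjI allI impI, goal_cases)
  case (2 \<epsilon>)
  define N where "N = max 8 (nat \<lceil>8 / \<epsilon>\<rceil>)"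
  have large: "8 \<le> n" "8 \<le> \<epsilon> * n" if "N \<le> n" for n
  proof -
    from that have "8 / \<epsilon> \<le> real n" unfolding N_def by linarith
    with that \<open>\<epsilon> > 0\<close> show "8 \<le> n" "8 \<le> \<epsilon> * n"
      unfolding N_def by (auto simp: field_simps)
  qed
  have "graphic_instance n (hub_matrix n S)" "onetwo_instance n (hub_matrix n S)"
    if "N \<le> n" for n S
    by (simp_all add: graphic_instance_hub_matrix onetwo_instance_hub_matrix)
  with large show ?case
    by (intro exI[of _ N]) (blast intro: queries_lower_bound)
qed simp

end
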